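(* Let $\alpha>0$, $t_0>0$, $x_0\in\mathcal H$, let $x$ be a solution of the Cauchy problem $$\tfrac{\alpha}{t}\dot x(t)+\operatorname{proj}_{C(x(t))+\ddot x(t)}(0)=0\ (t>t_0),\qquad x(t_0)=x_0,\ \dot x(t_0)=0,$$ and let $\theta:[t_0,+\infty)\to\Delta^m$ be a measurable function with $\operatorname{proj}_{C(x(t))+\ddot x(t)}(0)=\sum_i\theta_i(t)\nabla f_i(x(t))+\ddot x(t)$ for all $t$. Let $z\in\mathcal H$, $\mathcal W_i(t)=f_i(x(t))+\frac12\|\dot x(t)\|^2$ and $h_z(t)=\frac12\|x(t)-z\|^2$. Then for all $t\in[t_0,+\infty)$, $$\int_{t_0}^t\frac1s\sum_{i=1}^m\theta_i(s)\big(\mathcal W_i(s)-f_i(z)\big)\,ds+\frac{3}{2\alpha}\sum_{i=1}^m\theta_i(t)\big(\mathcal W_i(t)-f_i(z)\big)\le C_z-\frac1t\dot h_z(t),$$ with $C_z=(\alpha+1)\frac{1}{t_0^2}h_z(t_0)+\frac{3}{2\alpha}\max_{i=1,\dots,m}\big(f_i(x_0)-f_i(z)\big)$.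
   Context: $\mathcal H$ is a real Hilbert space. $f_1,\dots,f_m:\mathcal H\to\mathbb R$ are convex and continuously differentiable. $C(x)=\operatorname{co}\{\nabla f_i(x):i=1,\dots,m\}$. For a closed convex $K$, $\operatorname{proj}_K(y)=\arg\min_{w\in K}\|w-y\|^2$. $\Delta^m=\{\theta\in\mathbb R^m:\theta\ge0,\ \sum_i\theta_i=1\}$. A solution of the Cauchy problem is a function $x:[t_0,+\infty)\to\mathcal H$ such that: $x\in C^1([t_0,+\infty))$; $\dot x$ is absolutely continuous on $[t_0,T]$ for every $T\ge t_0$; there is a Bochner measurable $\ddot x$ with $\dot x(t)=\dot x(t_0)+\int_{t_0}^t\ddot x(s)\,ds$ for all $t$, and $\frac{d}{dt}\dot x=\ddot x$ a.e.; the equation holds for almost all $t\ge t_0$; and the initial conditions hold. *)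

theory Defs
  imports "HOL-Analysis.Analysis"
begin

text \<open>Metric projection onto a set K: the (unique, for K nonempty closed convex in a
Hilbert space) minimiser of w \<mapsto> norm (w - y)^2 over K.\<close>
definition proj :: "'a::real_inner set \<Rightarrow> 'a \<Rightarrow> 'a" where
  "proj K y = (THE w. w \<in> K \<and> (\<forall>v\<in>K. (norm (w - y))\<^sup>2 \<le> (norm (v - y))\<^sup>2))"

definition prob_simplex :: "nat \<Rightarrow> (nat \<Rightarrow> real) set" where
  "prob_simplex m = {\<theta>. (\<forall>i<m. \<theta> i \<ge> 0) \<and> (\<Sum>i<m. \<theta> i) = 1}"

end

(*
  Along the trajectory the projection equals -(alpha/t) x', so almost everywhere
  x'' = -(alpha/t) x' - G with G = sum_i theta_i grad f_i(x), and the variational inequality of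
  the projection gives <x', grad f_i(x)> <= <x', G>.  Hence each energy W_i decays at rate at
  least alpha |x'|^2 / t, which bounds (3/2) int |x'|^2/s by (3/(2 alpha)) (f_i(x0) - W_i(t)).
  Differentiating h_z'(t)/t and using convexity, f_i(x) - f_i(z) <= <x - z, grad f_i(x)>, bounds
  the integrand (1/s) sum_i theta_i (W_i - f_i(z)) by (3/2)|x'|^2/s - (alpha+1) h_z'/s^2 - (h_z'/s)';
  moreover int h_z'/s^2 >= -h_z(t0)/t0^2, because h_z'/s^2 is the derivative of h_z/s^2 plus the
  nonnegative term 2 h_z/s^3.  Averaging the energy bounds with the weights theta(t) concludes.
  Since x' is merely an indefinite integral of x'', the products are differentiated through an
  integration by parts for weak primitives.
*)

theory Submission
  imports Defs
begin

section \<open>Projection onto compact convex sets\<close>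

lemma proj_eqI:
  fixes K :: "'a::real_inner set"
  assumes "convex K" and "w \<in> K" and min: "\<And>v. v \<in> K \<Longrightarrow> (norm (w - y))\<^sup>2 \<le> (norm (v - y))\<^sup>2"
  shows "proj K y = w"
  unfolding proj_def
proof (rule the_equality)
  show "w \<in> K \<and> (\<forall>v\<in>K. (norm (w - y))\<^sup>2 \<le> (norm (v - y))\<^sup>2)"
    using assms(2) min by blast
next
  fix w' assume w': "w' \<in> K \<and> (\<forall>v\<in>K. (norm (w' - y))\<^sup>2 \<le> (norm (v - y))\<^sup>2)"
  define c where "c = (1/2) *\<^sub>R w + (1/2) *\<^sub>R w'"
  have "c \<in> K" unfolding c_def by (rule convexD[OF assms(1,2) conjunct1[OF w']]) auto
  have same: "(norm (w' - y))\<^sup>2 = (norm (w - y))\<^sup>2"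
    using min[of w'] w' assms(2) by (auto intro: antisym)
  have mid: "c - y = (1/2) *\<^sub>R (w - y) + (1/2) *\<^sub>R (w' - y)"
    unfolding c_def by (simp add: algebra_simps) (simp flip: scaleR_add_left)
  have "(norm (c - y))\<^sup>2 = (1/2) * (norm (w - y))\<^sup>2 + (1/2) * (norm (w' - y))\<^sup>2 - (1/4) * (norm (w - w'))\<^sup>2"
    unfolding mid power2_norm_eq_inner by (simp add: inner_commute algebra_simps)
  with min[OF \<open>c \<in> K\<close>] same have "(norm (w - w'))\<^sup>2 \<le> 0" by simp
  then show "w' = w" by simp
qed

lemma proj_compact_convex:
  fixes K :: "'a::real_inner set"
  assumes "compact K" and "convex K" and "K \<noteq> {}"
  shows "proj K y \<in> K" and "\<And>v. v \<in> K \<Longrightarrow> (norm (proj K y - y))\<^sup>2 \<le> (norm (v - y))\<^sup>2"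
proof -
  have "continuous_on K (\<lambda>w. (norm (w - y))\<^sup>2)" by (intro continuous_intros)
  then obtain w where w: "w \<in> K" "\<And>v. v \<in> K \<Longrightarrow> (norm (w - y))\<^sup>2 \<le> (norm (v - y))\<^sup>2"
    using continuous_attains_inf[OF assms(1,3)] by blast
  with proj_eqI[OF assms(2)] have "proj K y = w" by blast
  with w show "proj K y \<in> K" "\<And>v. v \<in> K \<Longrightarrow> (norm (proj K y - y))\<^sup>2 \<le> (norm (v - y))\<^sup>2" by auto
qed

lemma proj_variational_inequality:
  fixes K :: "'a::real_inner set"
  assumes "compact K" and "convex K" and "c \<in> K"
  shows "inner (y - proj K y) (c - proj K y) \<le> 0"
proof (rule ccontr)
  define p where "p = proj K y"
  have p: "p \<in> K" "\<And>v. v \<in> K \<Longrightarrow> (norm (p - y))\<^sup>2 \<le> (norm (v - y))\<^sup>2"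
    unfolding p_def using proj_compact_convex[OF assms(1,2)] assms(3) by blast+
  assume "\<not> inner (y - proj K y) (c - proj K y) \<le> 0"
  then have d: "inner (p - y) (c - p) < 0" by (simp add: p_def inner_diff_left)
  define q where "q = (norm (c - p))\<^sup>2"
  have "q > 0" using d unfolding q_def by auto
  \<comment> \<open>a short step from p towards c would get closer to y\<close>
  define s where "s = min 1 (- inner (p - y) (c - p) / q)"
  have s: "0 < s" "s \<le> 1" "s * q \<le> - inner (p - y) (c - p)"
    using d \<open>q > 0\<close> by (auto simp: s_def min_def field_simps)
  have "p + s *\<^sub>R (c - p) = (1 - s) *\<^sub>R p + s *\<^sub>R c" by (simp add: algebra_simps)
  also have "\<dots> \<in> K" using assms(2) p(1) assms(3) s by (intro convexD) auto
  finally have "(norm (p - y))\<^sup>2 \<le> (norm (p + s *\<^sub>R (c - p) - y))\<^sup>2" by (rule p(2))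
  also have "\<dots> = (norm (p - y))\<^sup>2 + s * (2 * inner (p - y) (c - p) + s * q)"
    unfolding q_def power2_norm_eq_inner
    by (simp add: inner_add_left inner_add_right inner_diff_left inner_diff_right inner_commute algebra_simps)
  finally have "0 \<le> s * (2 * inner (p - y) (c - p) + s * q)" by simp
  moreover have "2 * inner (p - y) (c - p) + s * q < 0" using s d by linarith
  ultimately show False using s(1) by (simp add: zero_le_mult_iff)
qed

lemma convex_on_gradient_inequality:
  fixes f :: "'a::real_inner \<Rightarrow> real"
  assumes "convex_on UNIV f" and "(f has_derivative (\<lambda>h. inner g h)) (at y)"
  shows "f y + inner g (z - y) \<le> f z"
proof -
  define \<phi> where "\<phi> s = f (y + s *\<^sub>R (z - y))" for s :: real
  have line: "((\<lambda>s::real. y + s *\<^sub>R (z - y)) has_derivative (\<lambda>s. s *\<^sub>R (z - y))) (at 0)"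
    by (auto intro!: derivative_eq_intros)
  have "(\<phi> has_derivative (\<lambda>s. inner g (s *\<^sub>R (z - y)))) (at 0)"
    unfolding \<phi>_def using has_derivative_compose[OF line, of f "\<lambda>h. inner g h"] assms(2) by simp
  moreover have "(\<lambda>s. inner g (s *\<^sub>R (z - y))) = (*) (inner g (z - y))" by (auto simp: fun_eq_iff)
  ultimately have "(\<phi> has_field_derivative inner g (z - y)) (at 0)"
    by (simp add: has_field_derivative_def)
  then have "(\<phi> has_field_derivative inner g (z - y)) (at 0 within {0<..})"
    by (rule has_field_derivative_at_within)
  then have slope: "((\<lambda>s. (\<phi> s - \<phi> 0) / (s - 0)) \<longlongrightarrow> inner g (z - y)) (at_right 0)"
    by (simp add: has_field_derivative_iff)
  have "\<forall>\<^sub>F s in at_right 0. (\<phi> s - \<phi> 0) / (s - 0) \<le> f z - f y"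
    unfolding eventually_at_right_field
  proof (intro exI[of _ 1] conjI allI impI)
    fix s :: real assume s: "0 < s" "s < 1"
    have "\<phi> s = f ((1 - s) *\<^sub>R y + s *\<^sub>R z)" unfolding \<phi>_def by (simp add: algebra_simps)
    also have "\<dots> \<le> (1 - s) * f y + s * f z"
      using s by (intro convex_onD[OF assms(1)]) auto
    finally show "(\<phi> s - \<phi> 0) / (s - 0) \<le> f z - f y"
      using s by (simp add: \<phi>_def field_simps)
  qed simp
  from tendsto_upperbound[OF slope this] show ?thesis by simp
qed

lemma integral_le_spike:
  fixes f g :: "'a::euclidean_space \<Rightarrow> real"
  assumes "f integrable_on S" and "g integrable_on S" and "negligible N"
    and "\<And>s. s \<in> S - N \<Longrightarrow> f s \<le> g s"
  shows "integral S f \<le> integral S g"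
proof -
  define f' where "f' s = (if s \<in> N then g s else f s)" for s
  have "(f' has_integral integral S f) S"
    by (rule has_integral_spike[OF assms(3) _ integrable_integral[OF assms(1)]]) (auto simp: f'_def)
  moreover have "f' s \<le> g s" if "s \<in> S" for s
    using assms(4) that by (auto simp: f'_def)
  ultimately show ?thesis by (rule has_integral_le[OF _ integrable_integral[OF assms(2)]])
qed

lemma AE_lborel_negligibleE:
  fixes P :: "'a::euclidean_space \<Rightarrow> bool"
  assumes "AE s in lborel. P s"
  obtains N where "negligible N" and "\<And>s. s \<notin> N \<Longrightarrow> P s"
proof -
  from assms obtain N where N: "{s \<in> space lborel. \<not> P s} \<subseteq> N" "emeasure lborel N = 0" "N \<in> sets lborel"
    by (rule AE_E)
  then have "N \<in> null_sets lborel" by (intro null_setsI)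
  then have "negligible N" unfolding negligible_iff_null_sets by (rule null_sets_completionI)
  with N(1) that show ?thesis by auto
qed

lemma integrable_bounded_measurable_mult_continuous:
  fixes \<phi> c :: "real \<Rightarrow> real"
  assumes "\<phi> \<in> borel_measurable (lebesgue_on {a..b})" and "\<And>s. s \<in> {a..b} \<Longrightarrow> \<bar>\<phi> s\<bar> \<le> B"
    and "continuous_on {a..b} c"
  shows "(\<lambda>s. \<phi> s * c s) integrable_on {a..b}"
proof -
  have "bounded (c ` {a..b})"
    by (intro compact_imp_bounded compact_continuous_image assms(3) compact_Icc)
  then obtain C where C: "\<forall>v\<in>c ` {a..b}. norm v \<le> C" unfolding bounded_iff ..
  have "c \<in> borel_measurable (lebesgue_on {a..b})"
    by (rule continuous_imp_measurable_on_sets_lebesgue[OF assms(3)]) simp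
  with assms(1) have meas: "(\<lambda>s. \<phi> s * c s) \<in> borel_measurable (lebesgue_on {a..b})"
    by (rule borel_measurable_times)
  have bound: "\<bar>\<phi> s * c s\<bar> \<le> B * C" if "s \<in> {a..b}" for s
  proof -
    have B: "\<bar>\<phi> s\<bar> \<le> B" and Cs: "\<bar>c s\<bar> \<le> C" using assms(2) C that by auto
    then have "0 \<le> B" by linarith
    with B Cs show ?thesis unfolding abs_mult by (intro mult_mono abs_ge_zero)
  qed
  show ?thesis
    by (rule measurable_bounded_by_integrable_imp_integrable_real[OF meas integrable_continuous_real[OF continuous_on_const] bound]) auto
qed

lemma prob_simplex_weighted_sum_le:
  assumes "p \<in> prob_simplex m" and "\<And>i. i < m \<Longrightarrow> a i \<le> c"
  shows "(\<Sum>i<m. p i * a i) \<le> c"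
proof -
  have "(\<Sum>i<m. p i * a i) \<le> (\<Sum>i<m. p i * c)"
    using assms by (intro sum_mono mult_left_mono) (simp_all add: prob_simplex_def)
  also have "\<dots> = c" using assms(1) by (simp add: prob_simplex_def flip: sum_distrib_right)
  finally show ?thesis .
qed

lemma has_integral_inner_vector_derivative:
  fixes u :: "real \<Rightarrow> 'a::real_inner"
  assumes "a \<le> b" and "\<And>s. s \<in> {a..b} \<Longrightarrow> (u has_vector_derivative u' s) (at s within {a..b})"
  shows "((\<lambda>s. inner w (u' s)) has_integral inner w (u b - u a)) {a..b}"
proof -
  have "((\<lambda>s. inner w (u s)) has_vector_derivative inner w (u' s)) (at s within {a..b})"
    if "s \<in> {a..b}" for s
    using has_derivative_inner_right[OF assms(2)[OF that, unfolded has_vector_derivative_def], of w]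
    by (simp add: has_vector_derivative_def)
  from fundamental_theorem_of_calculus[OF assms(1) this] show ?thesis
    by (simp add: inner_diff_right)
qed

section \<open>Integration by parts for weak primitives\<close>

lemma has_integral_increment_subinterval:
  fixes f :: "real \<Rightarrow> 'a::banach"
  assumes F: "\<And>T. T \<in> {a..b} \<Longrightarrow> (f has_integral (F T - F a)) {a..T}"
    and "a \<le> S" and "S \<le> T" and "T \<le> b"
  shows "(f has_integral (F T - F S)) {S..T}"
proof -
  have T: "(f has_integral (F T - F a)) {a..T}" and S: "(f has_integral (F S - F a)) {a..S}"
    using F assms(2-4) by auto
  have "f integrable_on {S..T}"
    using T assms(2) by (auto intro: integrable_subinterval_real)
  moreover have "integral {a..S} f + integral {S..T} f = integral {a..T} f"
    using assms(2,3) has_integral_integrable[OF T]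
    by (rule Henstock_Kurzweil_Integration.integral_combine)
  then have "integral {S..T} f = F T - F S"
    using integral_unique[OF T] integral_unique[OF S] by (simp add: algebra_simps)
  ultimately show ?thesis by (metis has_integral_integral)
qed

lemma abs_increment_le_of_short_increments:
  fixes F G :: "real \<Rightarrow> real"
  assumes "a \<le> b" and "d > 0"
    and short: "\<And>S T. a \<le> S \<Longrightarrow> S \<le> T \<Longrightarrow> T \<le> b \<Longrightarrow> T - S < d \<Longrightarrow> \<bar>F T - F S\<bar> \<le> G T - G S"
  shows "\<bar>F b - F a\<bar> \<le> G b - G a"
proof -
  have "\<bar>F T - F a\<bar> \<le> G T - G a" if "T \<in> {a..b}" "T - a \<le> real n * (d/2)" for n T
    using that
  proof (induction n arbitrary: T)
    case 0
    then show ?case by simp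
  next
    case (Suc n)
    define S where "S = max a (T - d/2)"
    have S: "a \<le> S" "S \<le> T" "T - S < d" "S - a \<le> real n * (d/2)"
      using Suc.prems \<open>d > 0\<close> by (auto simp: S_def algebra_simps max_def)
    have "\<bar>F T - F a\<bar> \<le> \<bar>F T - F S\<bar> + \<bar>F S - F a\<bar>" by linarith
    also have "\<dots> \<le> (G T - G S) + (G S - G a)"
      using short[of S T] Suc.IH[of S] Suc.prems S by (intro add_mono) auto
    finally show ?case by simp
  qed
  moreover obtain n where "(b - a) / (d/2) \<le> real n" using real_arch_simple by blast
  then have "b - a \<le> real n * (d/2)" using \<open>d > 0\<close> by (simp add: field_simps)
  ultimately show ?thesis using \<open>a \<le> b\<close> by auto
qed

lemma eq_of_locally_dominated_increments:
  fixes F G :: "real \<Rightarrow> real"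
  assumes "a \<le> b"
    and dominated: "\<And>e. e > 0 \<Longrightarrow> \<exists>d>0. \<forall>S T. a \<le> S \<longrightarrow> S \<le> T \<longrightarrow> T \<le> b \<longrightarrow> T - S < d \<longrightarrow>
      \<bar>F T - F S\<bar> \<le> e * (G T - G S)"
  shows "F b = F a"
proof -
  have bound: "\<bar>F b - F a\<bar> \<le> e * (G b - G a)" if e: "e > 0" for e
  proof -
    obtain d where "d > 0" and d: "\<forall>S T. a \<le> S \<longrightarrow> S \<le> T \<longrightarrow> T \<le> b \<longrightarrow> T - S < d \<longrightarrow>
        \<bar>F T - F S\<bar> \<le> e * (G T - G S)"
      using dominated[OF e] by blast
    then have "\<And>S T. a \<le> S \<Longrightarrow> S \<le> T \<Longrightarrow> T \<le> b \<Longrightarrow> T - S < d \<Longrightarrow> \<bar>F T - F S\<bar> \<le> e * G T - e * G S"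
      by (simp add: right_diff_distrib)
    from abs_increment_le_of_short_increments[of a b d F "\<lambda>T. e * G T", OF assms(1) \<open>d > 0\<close> this]
    show ?thesis by (simp add: right_diff_distrib)
  qed
  have "G b - G a \<ge> 0" using order_trans[OF abs_ge_zero bound[OF zero_less_one]] by simp
  have "\<bar>F b - F a\<bar> \<le> 0"
  proof (rule field_le_epsilon)
    fix \<epsilon> :: real assume "\<epsilon> > 0"
    with bound[of "\<epsilon> / (G b - G a + 1)"] \<open>G b - G a \<ge> 0\<close>
    have "\<bar>F b - F a\<bar> \<le> \<epsilon> / (G b - G a + 1) * (G b - G a)" by simp
    also have "\<dots> \<le> \<epsilon>" using \<open>\<epsilon> > 0\<close> \<open>G b - G a \<ge> 0\<close> by (simp add: field_simps)
    finally show "\<bar>F b - F a\<bar> \<le> 0 + \<epsilon>" by simp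
  qed
  then show ?thesis by simp
qed

lemma has_integral_inner_increment:
  fixes u v a b :: "real \<Rightarrow> 'a::real_inner"
  assumes u: "\<And>w T. T \<in> {t0..t1} \<Longrightarrow> ((\<lambda>s. inner w (a s)) has_integral inner w (u T - u t0)) {t0..T}"
    and v: "\<And>w T. T \<in> {t0..t1} \<Longrightarrow> ((\<lambda>s. inner w (b s)) has_integral inner w (v T - v t0)) {t0..T}"
    and \<phi>: "(\<lambda>s. inner (a s) (v s) + inner (u s) (b s)) integrable_on {t0..t1}"
    and ST: "t0 \<le> S" "S \<le> T" "T \<le> t1"
  shows "((\<lambda>s. inner (a s) (v T - v s) + inner (u S - u s) (b s)) has_integral
      inner (u T) (v T) - inner (u S) (v S) - integral {S..T} (\<lambda>s. inner (a s) (v s) + inner (u s) (b s)))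
      {S..T}"
proof -
  have "((\<lambda>s. inner w (a s)) has_integral inner w (u T) - inner w (u S)) {S..T}"
    and "((\<lambda>s. inner w (b s)) has_integral inner w (v T) - inner w (v S)) {S..T}" for w
    using has_integral_increment_subinterval[of t0 t1 "\<lambda>s. inner w (a s)" "\<lambda>T. inner w (u T)" S T]
      has_integral_increment_subinterval[of t0 t1 "\<lambda>s. inner w (b s)" "\<lambda>T. inner w (v T)" S T]
      u v ST by (simp_all add: inner_diff_right)
  moreover have "(\<lambda>s. inner (a s) (v s) + inner (u s) (b s)) integrable_on {S..T}"
    using ST by (intro integrable_subinterval_real[OF \<phi>]) auto
  ultimately have "((\<lambda>s. inner (v T) (a s) + inner (u S) (b s) - (inner (a s) (v s) + inner (u s) (b s)))
      has_integral inner (v T) (u T) - inner (v T) (u S) + (inner (u S) (v T) - inner (u S) (v S))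
        - integral {S..T} (\<lambda>s. inner (a s) (v s) + inner (u s) (b s))) {S..T}"
    by (intro has_integral_diff has_integral_add integrable_integral)
  then show ?thesis
    by (simp add: inner_diff_left inner_diff_right inner_commute algebra_simps)
qed

lemma abs_integral_inner_oscillation_le:
  fixes u v a b :: "real \<Rightarrow> 'a::real_inner"
  assumes I: "((\<lambda>s. inner (a s) (v T - v s) + inner (u S - u s) (b s)) has_integral I) {S..T}"
    and N: "(\<lambda>s. norm (a s) + norm (b s)) integrable_on {S..T}"
    and osc: "\<And>s. s \<in> {S..T} \<Longrightarrow> norm (v T - v s) \<le> e \<and> norm (u S - u s) \<le> e"
  shows "\<bar>I\<bar> \<le> e * integral {S..T} (\<lambda>s. norm (a s) + norm (b s))"
proof -
  have "norm (inner (a s) (v T - v s) + inner (u S - u s) (b s)) \<le> e * (norm (a s) + norm (b s))"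
    if "s \<in> {S..T}" for s
  proof -
    have "norm (a s) * norm (v T - v s) + norm (u S - u s) * norm (b s)
        \<le> norm (a s) * e + e * norm (b s)"
      using osc[OF that] by (intro add_mono mult_left_mono mult_right_mono) simp_all
    then show ?thesis
      using Cauchy_Schwarz_ineq2[of "a s" "v T - v s"] Cauchy_Schwarz_ineq2[of "u S - u s" "b s"]
      by (simp add: algebra_simps)
  qed
  from integral_norm_bound_integral[OF has_integral_integrable[OF I] integrable_on_mult_right[OF N] this]
  show ?thesis by (simp add: integral_unique[OF I])
qed

text \<open>
  The hypotheses say, tested against every w, that u and v are indefinite integrals of a and b.
  Testing is needed because the interval lemmas of Henstock-Kurzweil integration (such as
  integral_combine) require a Banach space, and real_inner is not one.
\<close>
lemma has_integral_inner_by_parts: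
  fixes u v a b :: "real \<Rightarrow> 'a::real_inner"
  assumes "t0 \<le> t1"
    and cont: "continuous_on {t0..t1} u" "continuous_on {t0..t1} v"
    and u: "\<And>w T. T \<in> {t0..t1} \<Longrightarrow> ((\<lambda>s. inner w (a s)) has_integral inner w (u T - u t0)) {t0..T}"
    and v: "\<And>w T. T \<in> {t0..t1} \<Longrightarrow> ((\<lambda>s. inner w (b s)) has_integral inner w (v T - v t0)) {t0..T}"
    and "(\<lambda>s. norm (a s)) integrable_on {t0..t1}" and "(\<lambda>s. norm (b s)) integrable_on {t0..t1}"
    and "(\<lambda>s. inner (a s) (v s)) integrable_on {t0..t1}" and "(\<lambda>s. inner (u s) (b s)) integrable_on {t0..t1}"
  shows "((\<lambda>s. inner (a s) (v s) + inner (u s) (b s)) has_integral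
           inner (u t1) (v t1) - inner (u t0) (v t0)) {t0..t1}"
proof -
  define \<phi> where "\<phi> s = inner (a s) (v s) + inner (u s) (b s)" for s
  define N where "N s = norm (a s) + norm (b s)" for s
  have \<phi>: "\<phi> integrable_on {t0..t1}" unfolding \<phi>_def using assms(8,9) by (rule integrable_add)
  have N: "N integrable_on {t0..t1}" unfolding N_def using assms(6,7) by (rule integrable_add)
  have combine: "integral {t0..T} h - integral {t0..S} h = integral {S..T} h"
    if "h integrable_on {t0..t1}" "t0 \<le> S" "S \<le> T" "T \<le> t1" for h :: "real \<Rightarrow> real" and S T
  proof -
    have "h integrable_on {t0..T}" by (rule integrable_subinterval_real[OF that(1)]) (use that in auto)
    with Henstock_Kurzweil_Integration.integral_combine[of t0 S T h] that show ?thesis by simp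
  qed
  \<comment> \<open>on short intervals the defect of the product rule is controlled by the oscillation of u and v\<close>
  have "inner (u t1) (v t1) - integral {t0..t1} \<phi> = inner (u t0) (v t0) - integral {t0..t0} \<phi>"
  proof (rule eq_of_locally_dominated_increments[OF assms(1), where G = "\<lambda>T. integral {t0..T} N"])
    fix e :: real assume "e > 0"
    obtain du where "du > 0" and du: "\<And>s s'. s \<in> {t0..t1} \<Longrightarrow> s' \<in> {t0..t1} \<Longrightarrow> dist s' s < du \<Longrightarrow>
        dist (u s') (u s) < e"
      using uniformly_continuous_onE[OF compact_uniformly_continuous[OF cont(1) compact_Icc] \<open>e > 0\<close>]
      by metis
    obtain dv where "dv > 0" and dv: "\<And>s s'. s \<in> {t0..t1} \<Longrightarrow> s' \<in> {t0..t1} \<Longrightarrow> dist s' s < dv \<Longrightarrow>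
        dist (v s') (v s) < e"
      using uniformly_continuous_onE[OF compact_uniformly_continuous[OF cont(2) compact_Icc] \<open>e > 0\<close>]
      by metis
    define d where "d = min du dv"
    have "\<bar>(inner (u T) (v T) - integral {t0..T} \<phi>) - (inner (u S) (v S) - integral {t0..S} \<phi>)\<bar>
        \<le> e * (integral {t0..T} N - integral {t0..S} N)"
      if ST: "t0 \<le> S" "S \<le> T" "T \<le> t1" "T - S < d" for S T
    proof -
      have defect: "((\<lambda>s. inner (a s) (v T - v s) + inner (u S - u s) (b s)) has_integral
          inner (u T) (v T) - inner (u S) (v S) - integral {S..T} \<phi>) {S..T}"
        unfolding \<phi>_def using u v \<phi>[unfolded \<phi>_def] ST(1-3) by (rule has_integral_inner_increment)
      have "(\<lambda>s. norm (a s) + norm (b s)) integrable_on {S..T}"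
        using ST by (intro integrable_subinterval_real[OF N[unfolded N_def]]) auto
      moreover have "norm (v T - v s) \<le> e \<and> norm (u S - u s) \<le> e" if "s \<in> {S..T}" for s
        using du[of S s] dv[of s T] that ST by (auto simp: d_def dist_norm norm_minus_commute)
      ultimately have "\<bar>inner (u T) (v T) - inner (u S) (v S) - integral {S..T} \<phi>\<bar> \<le> e * integral {S..T} N"
        unfolding N_def by (rule abs_integral_inner_oscillation_le[OF defect])
      then show ?thesis
        using combine[OF \<phi> ST(1-3)] combine[OF N ST(1-3)] by (simp add: algebra_simps)
    qed
    moreover have "d > 0" using \<open>du > 0\<close> \<open>dv > 0\<close> by (simp add: d_def)
    ultimately show "\<exists>d>0. \<forall>S T. t0 \<le> S \<longrightarrow> S \<le> T \<longrightarrow> T \<le> t1 \<longrightarrow> T - S < d \<longrightarrow>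
        \<bar>(inner (u T) (v T) - integral {t0..T} \<phi>) - (inner (u S) (v S) - integral {t0..S} \<phi>)\<bar>
          \<le> e * (integral {t0..T} N - integral {t0..S} N)"
      by blast
  qed
  then have "integral {t0..t1} \<phi> = inner (u t1) (v t1) - inner (u t0) (v t0)" by simp
  with \<phi> show ?thesis unfolding \<phi>_def by (metis has_integral_integral)
qed

section \<open>Trajectories with asymptotically vanishing damping\<close>

locale vanishing_damping_solution =
  fixes f :: "nat \<Rightarrow> 'a::real_inner \<Rightarrow> real"
    and g :: "nat \<Rightarrow> 'a \<Rightarrow> 'a"
    and m :: nat and \<alpha> t0 :: real
    and x x' x'' :: "real \<Rightarrow> 'a"
    and \<theta> :: "real \<Rightarrow> nat \<Rightarrow> real"
  assumes conv: "\<And>i. i < m \<Longrightarrow> convex_on UNIV (f i)"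
    and grad: "\<And>i y. i < m \<Longrightarrow> (f i has_derivative (\<lambda>h. inner (g i y) h)) (at y)"
    and grad_cont: "\<And>i. i < m \<Longrightarrow> continuous_on UNIV (g i)"
    and \<alpha>_pos: "\<alpha> > 0" and t0_pos: "t0 > 0"
    and x_deriv: "\<And>t. t \<ge> t0 \<Longrightarrow> (x has_vector_derivative x' t) (at t within {t0..})"
    and x'_cont: "continuous_on {t0..} x'"
    and x''_norm_integrable: "\<And>T. T \<ge> t0 \<Longrightarrow> (\<lambda>s. norm (x'' s)) integrable_on {t0..T}"
    and x'_eq: "\<And>t. t \<ge> t0 \<Longrightarrow> (x'' has_integral (x' t - x' t0)) {t0..t}"
    and eqn: "AE t in lborel. t > t0 \<longrightarrow>
       (\<alpha> / t) *\<^sub>R x' t + proj ((\<lambda>c. c + x'' t) ` (convex hull {g i (x t) | i. i < m})) 0 = 0"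
    and x'_init: "x' t0 = 0"
    and \<theta>_simplex: "\<And>t. t \<ge> t0 \<Longrightarrow> \<theta> t \<in> prob_simplex m"
    and \<theta>_meas: "\<And>i. i < m \<Longrightarrow> (\<lambda>t. \<theta> t i) \<in> borel_measurable (lebesgue_on {t0..})"
    and \<theta>_proj: "\<And>t. t \<ge> t0 \<Longrightarrow>
       proj ((\<lambda>c. c + x'' t) ` (convex hull {g i (x t) | i. i < m})) 0
         = (\<Sum>i<m. \<theta> t i *\<^sub>R g i (x t)) + x'' t"
begin

definition weighted_gradient :: "real \<Rightarrow> 'a" where
  "weighted_gradient s = (\<Sum>i<m. \<theta> s i *\<^sub>R g i (x s))"

lemma theta_nonneg: "t0 \<le> s \<Longrightarrow> i < m \<Longrightarrow> 0 \<le> \<theta> s i"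
  using \<theta>_simplex by (simp add: prob_simplex_def)

lemma theta_sum: "t0 \<le> s \<Longrightarrow> (\<Sum>i<m. \<theta> s i) = 1"
  using \<theta>_simplex by (simp add: prob_simplex_def)

lemma abs_theta_le_1:
  assumes "t0 \<le> s" and "i < m"
  shows "\<bar>\<theta> s i\<bar> \<le> 1"
proof -
  have "\<theta> s i \<le> (\<Sum>j<m. \<theta> s j)"
    using assms theta_nonneg by (intro member_le_sum) auto
  with assms theta_nonneg[OF assms] show ?thesis by (simp add: theta_sum)
qed

lemma x_has_vector_derivative: "t0 \<le> s \<Longrightarrow> S \<subseteq> {t0..} \<Longrightarrow> (x has_vector_derivative x' s) (at s within S)"
  using x_deriv has_vector_derivative_within_subset by blast

lemma continuous_on_x: "continuous_on {t0..t} x"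
proof -
  have "continuous_on {t0..} x"
    unfolding continuous_on_eq_continuous_within
    using x_deriv has_vector_derivative_continuous by fastforce
  then show ?thesis by (rule continuous_on_subset) auto
qed

lemma continuous_on_x': "continuous_on {t0..t} x'"
  using x'_cont by (rule continuous_on_subset) auto

lemma continuous_on_f_x: "i < m \<Longrightarrow> continuous_on {t0..t} (\<lambda>s. f i (x s))"
  using continuous_on_compose2[OF has_derivative_continuous_on[OF grad] continuous_on_x] by auto

lemma continuous_on_g_x: "i < m \<Longrightarrow> continuous_on {t0..t} (\<lambda>s. g i (x s))"
  using continuous_on_compose2[OF grad_cont continuous_on_x] by auto

lemma integrable_theta_combination:
  assumes "\<And>i. i < m \<Longrightarrow> continuous_on {t0..t} (c i)"
  shows "(\<lambda>s. \<Sum>i<m. \<theta> s i * c i s) integrable_on {t0..t}"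
proof (intro integrable_sum)
  fix i assume "i \<in> {..<m}"
  then show "(\<lambda>s. \<theta> s i * c i s) integrable_on {t0..t}"
    using measurable_restrict_mono[OF \<theta>_meas] abs_theta_le_1 assms
    by (intro integrable_bounded_measurable_mult_continuous[where B = 1]) auto
qed simp

lemma inner_gradient_le_weighted_gradient:
  assumes "t0 \<le> s" and "i < m" and ode: "x'' s = - ((\<alpha> / s) *\<^sub>R x' s) - weighted_gradient s"
  shows "inner (x' s) (g i (x s)) \<le> inner (x' s) (weighted_gradient s)"
proof -
  define K where "K = (\<lambda>c. c + x'' s) ` (convex hull {g i (x s) | i. i < m})"
  have translate: "(\<lambda>c. c + x'' s) = (+) (x'' s)" by (auto simp: fun_eq_iff)
  have "compact K" unfolding K_def translate
    by (rule compact_translation[OF finite_imp_compact_convex_hull]) simp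
  moreover have "convex K" unfolding K_def translate
    by (rule convex_translation[OF convex_convex_hull])
  moreover have "g i (x s) + x'' s \<in> K"
    unfolding K_def using \<open>i < m\<close> by (intro imageI hull_inc) auto
  ultimately have "inner (0 - proj K 0) ((g i (x s) + x'' s) - proj K 0) \<le> 0"
    by (rule proj_variational_inequality)
  moreover have "proj K 0 = weighted_gradient s + x'' s"
    using \<theta>_proj[OF assms(1)] unfolding K_def weighted_gradient_def by simp
  also have "\<dots> = - ((\<alpha> / s) *\<^sub>R x' s)" using ode by simp
  ultimately have "(\<alpha> / s) * (inner (x' s) (g i (x s)) - inner (x' s) (weighted_gradient s)) \<le> 0"
    using ode by (simp add: inner_diff_right algebra_simps)
  moreover have "\<alpha> / s > 0" using \<alpha>_pos t0_pos assms(1) by auto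
  ultimately show ?thesis by (meson diff_le_0_iff_le less_le_not_le mult_le_0_iff)
qed

lemma dynamics_ae:
  obtains N where "negligible N"
    and "\<And>s. s \<in> {t0..} - N \<Longrightarrow> x'' s = - ((\<alpha> / s) *\<^sub>R x' s) - weighted_gradient s"
    and "\<And>s i. s \<in> {t0..} - N \<Longrightarrow> i < m \<Longrightarrow> inner (x' s) (g i (x s)) \<le> inner (x' s) (weighted_gradient s)"
proof -
  obtain N where "negligible N" and N: "\<And>s. s \<notin> N \<Longrightarrow> s > t0 \<longrightarrow>
      (\<alpha> / s) *\<^sub>R x' s + proj ((\<lambda>c. c + x'' s) ` (convex hull {g i (x s) | i. i < m})) 0 = 0"
    using AE_lborel_negligibleE[OF eqn] by blast
  have ode: "x'' s = - ((\<alpha> / s) *\<^sub>R x' s) - weighted_gradient s" if s: "s \<in> {t0..} - insert t0 N" for s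
  proof -
    have "(\<alpha> / s) *\<^sub>R x' s + (weighted_gradient s + x'' s) = 0"
      using N[of s] \<theta>_proj[of s] s unfolding weighted_gradient_def by auto
    then show ?thesis by (simp add: add_eq_0_iff eq_diff_eq add.commute)
  qed
  show ?thesis
    using \<open>negligible N\<close> ode inner_gradient_le_weighted_gradient[OF _ _ ode]
    by (intro that[of "insert t0 N"]) auto
qed

lemma integrable_inner_x'':
  assumes "continuous_on {t0..t} u"
  shows "(\<lambda>s. inner (u s) (x'' s)) integrable_on {t0..t}"
proof -
  obtain N where "negligible N"
    and ode: "\<And>s. s \<in> {t0..} - N \<Longrightarrow> x'' s = - ((\<alpha> / s) *\<^sub>R x' s) - weighted_gradient s"
    by (metis dynamics_ae)
  have "(\<lambda>s. - (\<alpha> / s) * inner (u s) (x' s)) integrable_on {t0..t}"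
    using t0_pos by (intro integrable_continuous_real continuous_intros assms continuous_on_x') auto
  moreover have "(\<lambda>s. \<Sum>i<m. \<theta> s i * inner (u s) (g i (x s))) integrable_on {t0..t}"
    by (intro integrable_theta_combination continuous_on_inner assms continuous_on_g_x)
  ultimately have "(\<lambda>s. - (\<alpha> / s) * inner (u s) (x' s) - (\<Sum>i<m. \<theta> s i * inner (u s) (g i (x s))))
      integrable_on {t0..t}"
    by (rule integrable_diff)
  then show ?thesis using \<open>negligible N\<close>
    by (rule integrable_spike) (simp add: ode weighted_gradient_def inner_diff_right inner_sum_right)
qed

lemma x'_weak_primitive:
  "t0 \<le> T \<Longrightarrow> ((\<lambda>s. inner w (x'' s)) has_integral inner w (x' T - x' t0)) {t0..T}"
  using has_integral_linear[OF x'_eq bounded_linear_inner_right[of w]] by (simp add: o_def)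

lemma kinetic_energy_has_integral:
  assumes "t0 \<le> t"
  shows "((\<lambda>s. inner (x' s) (x'' s)) has_integral (1/2) * (norm (x' t))\<^sup>2) {t0..t}"
proof -
  have "((\<lambda>s. inner (x'' s) (x' s) + inner (x' s) (x'' s)) has_integral
      inner (x' t) (x' t) - inner (x' t0) (x' t0)) {t0..t}"
    using assms x''_norm_integrable[OF assms] integrable_inner_x''[OF continuous_on_x']
    by (intro has_integral_inner_by_parts continuous_on_x' x'_weak_primitive)
      (auto simp: inner_commute)
  from has_integral_mult_right[OF this, of "1/2"] show ?thesis
    by (simp add: x'_init inner_commute power2_norm_eq_inner)
qed

lemma energy_estimate:
  assumes "t0 \<le> t" and "i < m"
  shows "\<alpha> * integral {t0..t} (\<lambda>s. (norm (x' s))\<^sup>2 / s) \<le> f i (x t0) - (f i (x t) + (1/2) * (norm (x' t))\<^sup>2)"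
proof -
  obtain N where "negligible N"
    and ode: "\<And>s. s \<in> {t0..} - N \<Longrightarrow> x'' s = - ((\<alpha> / s) *\<^sub>R x' s) - weighted_gradient s"
    and descent: "\<And>s. s \<in> {t0..} - N \<Longrightarrow> inner (x' s) (g i (x s)) \<le> inner (x' s) (weighted_gradient s)"
    using dynamics_ae \<open>i < m\<close> by metis
  have "((\<lambda>s. f i (x s)) has_vector_derivative inner (g i (x s)) (x' s)) (at s within {t0..t})"
    if "s \<in> {t0..t}" for s
    using vector_derivative_diff_chain_within[OF x_has_vector_derivative has_derivative_subset[OF grad]]
      that \<open>i < m\<close> by (auto simp: o_def)
  from has_integral_add[OF fundamental_theorem_of_calculus[OF assms(1) this]
      kinetic_energy_has_integral[OF assms(1)]]
  have energy: "((\<lambda>s. inner (g i (x s)) (x' s) + inner (x' s) (x'' s)) has_integral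
      f i (x t) + (1/2) * (norm (x' t))\<^sup>2 - f i (x t0)) {t0..t}"
    by (simp add: algebra_simps)
  have "integral {t0..t} (\<lambda>s. inner (g i (x s)) (x' s) + inner (x' s) (x'' s))
      \<le> integral {t0..t} (\<lambda>s. - \<alpha> * ((norm (x' s))\<^sup>2 / s))"
  proof (rule integral_le_spike[OF has_integral_integrable[OF energy] _ \<open>negligible N\<close>])
    show "(\<lambda>s. - \<alpha> * ((norm (x' s))\<^sup>2 / s)) integrable_on {t0..t}"
      using t0_pos by (intro integrable_continuous_real continuous_intros continuous_on_x') auto
    fix s assume "s \<in> {t0..t} - N"
    then show "inner (g i (x s)) (x' s) + inner (x' s) (x'' s) \<le> - \<alpha> * ((norm (x' s))\<^sup>2 / s)"
      using ode[of s] descent[of s]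
      by (simp add: inner_diff_right inner_commute power2_norm_eq_inner)
  qed
  also have "\<dots> = - \<alpha> * integral {t0..t} (\<lambda>s. (norm (x' s))\<^sup>2 / s)"
    by (rule integral_mult_right)
  finally show ?thesis using integral_unique[OF energy] by simp
qed

text \<open>
  With h_z(t) = |x t - z|^2 / 2, the pairing of scaled_gap z t with x' t is h_z'(t)/t, and half
  its squared norm is h_z(t)/t^2; scaled_gap' is its derivative.
\<close>
definition scaled_gap :: "'a \<Rightarrow> real \<Rightarrow> 'a" where
  "scaled_gap z s = (1/s) *\<^sub>R (x s - z)"

definition scaled_gap' :: "'a \<Rightarrow> real \<Rightarrow> 'a" where
  "scaled_gap' z s = (1/s) *\<^sub>R x' s - (1/s\<^sup>2) *\<^sub>R (x s - z)"

lemma scaled_gap_has_vector_derivative: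
  assumes "t0 \<le> s" and "S \<subseteq> {t0..}"
  shows "(scaled_gap z has_vector_derivative scaled_gap' z s) (at s within S)"
proof -
  have "((\<lambda>s. 1/s) has_real_derivative - 1/s\<^sup>2) (at s within S)"
    using assms(1) t0_pos by (auto intro!: derivative_eq_intros simp: power2_eq_square)
  moreover have "((\<lambda>s. x s - z) has_vector_derivative x' s) (at s within S)"
    using has_vector_derivative_diff[OF x_has_vector_derivative[OF assms] has_vector_derivative_const]
    by simp
  ultimately show ?thesis
    unfolding scaled_gap_def[abs_def] scaled_gap'_def
    by (auto dest: has_vector_derivative_scaleR simp: algebra_simps)
qed

lemma continuous_on_scaled_gap: "continuous_on {t0..t} (scaled_gap z)"
  unfolding scaled_gap_def[abs_def] using t0_pos
  by (intro continuous_intros continuous_on_x) auto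

lemma continuous_on_scaled_gap': "continuous_on {t0..t} (scaled_gap' z)"
  unfolding scaled_gap'_def[abs_def] using t0_pos
  by (intro continuous_intros continuous_on_x continuous_on_x') auto

lemma scaled_gap_weak_primitive:
  "t0 \<le> T \<Longrightarrow> ((\<lambda>s. inner w (scaled_gap' z s)) has_integral inner w (scaled_gap z T - scaled_gap z t0)) {t0..T}"
  by (intro has_integral_inner_vector_derivative scaled_gap_has_vector_derivative) auto

lemma gap_integral_lower_bound:
  assumes "t0 \<le> t"
  shows "- (1/2) * (norm (scaled_gap z t0))\<^sup>2 \<le> integral {t0..t} (\<lambda>s. inner (x s - z) (x' s) / s\<^sup>2)"
proof -
  have "((\<lambda>s. inner (scaled_gap' z s) (scaled_gap z s) + inner (scaled_gap z s) (scaled_gap' z s))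
      has_integral inner (scaled_gap z t) (scaled_gap z t) - inner (scaled_gap z t0) (scaled_gap z t0)) {t0..t}"
    using assms
    by (intro has_integral_inner_by_parts continuous_on_scaled_gap scaled_gap_weak_primitive
        integrable_continuous_real continuous_intros continuous_on_scaled_gap') auto
  from has_integral_mult_right[OF this, of "1/2"]
  have gap: "((\<lambda>s. inner (scaled_gap' z s) (scaled_gap z s)) has_integral
      (1/2) * ((norm (scaled_gap z t))\<^sup>2 - (norm (scaled_gap z t0))\<^sup>2)) {t0..t}"
    by (simp add: inner_commute power2_norm_eq_inner)
  have cubic: "(\<lambda>s. (norm (x s - z))\<^sup>2 / s ^ 3) integrable_on {t0..t}"
    using t0_pos by (intro integrable_continuous_real continuous_intros continuous_on_x) auto
  \<comment> \<open>the rate of the squared scaled gap differs from the integrand by a nonnegative term\<close>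
  have "((\<lambda>s. inner (x s - z) (x' s) / s\<^sup>2) has_integral
      (1/2) * ((norm (scaled_gap z t))\<^sup>2 - (norm (scaled_gap z t0))\<^sup>2)
      + integral {t0..t} (\<lambda>s. (norm (x s - z))\<^sup>2 / s ^ 3)) {t0..t}"
  proof (rule has_integral_eq[OF _ has_integral_add[OF gap integrable_integral[OF cubic]]])
    fix s assume "s \<in> {t0..t}"
    then have "s \<noteq> 0" using t0_pos by auto
    then show "inner (scaled_gap' z s) (scaled_gap z s) + (norm (x s - z))\<^sup>2 / s ^ 3
        = inner (x s - z) (x' s) / s\<^sup>2"
      unfolding scaled_gap_def scaled_gap'_def power2_norm_eq_inner
      by (simp add: inner_diff_left inner_diff_right inner_commute power2_eq_square power3_eq_cube divide_simps)
  qed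
  then have "integral {t0..t} (\<lambda>s. inner (x s - z) (x' s) / s\<^sup>2)
      = (1/2) * ((norm (scaled_gap z t))\<^sup>2 - (norm (scaled_gap z t0))\<^sup>2)
        + integral {t0..t} (\<lambda>s. (norm (x s - z))\<^sup>2 / s ^ 3)"
    by (rule integral_unique)
  moreover have "0 \<le> integral {t0..t} (\<lambda>s. (norm (x s - z))\<^sup>2 / s ^ 3)"
    using cubic by (rule integral_nonneg) (use t0_pos in simp)
  moreover have "0 \<le> (norm (scaled_gap z t))\<^sup>2" by simp
  ultimately show ?thesis by argo
qed

lemma anchor_has_integral:
  assumes "t0 \<le> t"
  shows "((\<lambda>s. inner (scaled_gap' z s) (x' s) + inner (scaled_gap z s) (x'' s)) has_integral
      (1/t) * inner (x t - z) (x' t)) {t0..t}"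
proof -
  have "((\<lambda>s. inner (scaled_gap' z s) (x' s) + inner (scaled_gap z s) (x'' s)) has_integral
      inner (scaled_gap z t) (x' t) - inner (scaled_gap z t0) (x' t0)) {t0..t}"
    using assms
    by (intro has_integral_inner_by_parts continuous_on_scaled_gap continuous_on_x'
        scaled_gap_weak_primitive x'_weak_primitive x''_norm_integrable integrable_inner_x'')
      (auto intro!: integrable_continuous_real continuous_intros continuous_on_scaled_gap' continuous_on_x')
  then show ?thesis by (simp add: scaled_gap_def x'_init)
qed

lemma energy_gap_le_anchor_rate:
  assumes "t0 \<le> s" and ode: "x'' s = - ((\<alpha> / s) *\<^sub>R x' s) - weighted_gradient s"
  shows "(1/s) * (\<Sum>i<m. \<theta> s i * (f i (x s) + (1/2) * (norm (x' s))\<^sup>2 - f i z))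
    \<le> (3/2) * ((norm (x' s))\<^sup>2 / s) - (\<alpha> + 1) * (inner (x s - z) (x' s) / s\<^sup>2)
      - (inner (scaled_gap' z s) (x' s) + inner (scaled_gap z s) (x'' s))"
proof -
  have "s > 0" using assms(1) t0_pos by simp
  define Sf where "Sf = (\<Sum>i<m. \<theta> s i * (f i (x s) - f i z))"
  define Sg where "Sg = (\<Sum>i<m. \<theta> s i * inner (x s - z) (g i (x s)))"
  have "Sf \<le> Sg"
    unfolding Sf_def Sg_def
  proof (intro sum_mono mult_left_mono)
    fix i assume "i \<in> {..<m}"
    then show "0 \<le> \<theta> s i" and "f i (x s) - f i z \<le> inner (x s - z) (g i (x s))"
      using convex_on_gradient_inequality[OF conv grad, of i "x s" z] theta_nonneg[OF assms(1)]
      by (auto simp: inner_diff_left inner_commute)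
  qed
  have "(\<Sum>i<m. \<theta> s i * (f i (x s) + (1/2) * (norm (x' s))\<^sup>2 - f i z))
      = Sf + (\<Sum>i<m. \<theta> s i) * ((1/2) * (norm (x' s))\<^sup>2)"
    unfolding Sf_def sum_distrib_right sum.distrib[symmetric] by (rule sum.cong) (auto simp: algebra_simps)
  then have lhs: "(1/s) * (\<Sum>i<m. \<theta> s i * (f i (x s) + (1/2) * (norm (x' s))\<^sup>2 - f i z))
      = (Sf + (1/2) * (norm (x' s))\<^sup>2) / s"
    using theta_sum[OF assms(1)] by simp
  have "inner (x s - z) (x'' s) = - (\<alpha> / s) * inner (x s - z) (x' s) - Sg"
    unfolding ode weighted_gradient_def Sg_def by (simp add: inner_diff_right inner_sum_right)
  then have x'': "inner (scaled_gap z s) (x'' s) = (1/s) * (- (\<alpha> / s) * inner (x s - z) (x' s) - Sg)"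
    unfolding scaled_gap_def by simp
  have x': "inner (scaled_gap' z s) (x' s) = (norm (x' s))\<^sup>2 / s - inner (x s - z) (x' s) / s\<^sup>2"
    by (simp add: scaled_gap'_def inner_diff_left power2_norm_eq_inner)
  have rhs: "(3/2) * ((norm (x' s))\<^sup>2 / s) - (\<alpha> + 1) * (inner (x s - z) (x' s) / s\<^sup>2)
      - (inner (scaled_gap' z s) (x' s) + inner (scaled_gap z s) (x'' s))
      = (Sg + (1/2) * (norm (x' s))\<^sup>2) / s"
    unfolding x' x'' using \<open>s > 0\<close> by (simp add: power2_eq_square field_simps)
  show ?thesis
    unfolding lhs rhs using \<open>Sf \<le> Sg\<close> \<open>s > 0\<close> by (simp add: divide_right_mono)
qed

lemma anchor_estimate:
  assumes "t0 \<le> t"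
  shows "integral {t0..t} (\<lambda>s. (1/s) * (\<Sum>i<m. \<theta> s i * (f i (x s) + (1/2) * (norm (x' s))\<^sup>2 - f i z)))
    \<le> (3/2) * integral {t0..t} (\<lambda>s. (norm (x' s))\<^sup>2 / s)
      - (\<alpha> + 1) * integral {t0..t} (\<lambda>s. inner (x s - z) (x' s) / s\<^sup>2)
      - (1/t) * inner (x t - z) (x' t)"
proof -
  obtain N where "negligible N"
    and ode: "\<And>s. s \<in> {t0..} - N \<Longrightarrow> x'' s = - ((\<alpha> / s) *\<^sub>R x' s) - weighted_gradient s"
    by (metis dynamics_ae)
  have rate: "((\<lambda>s. (3/2) * ((norm (x' s))\<^sup>2 / s) - (\<alpha> + 1) * (inner (x s - z) (x' s) / s\<^sup>2)
      - (inner (scaled_gap' z s) (x' s) + inner (scaled_gap z s) (x'' s))) has_integral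
      (3/2) * integral {t0..t} (\<lambda>s. (norm (x' s))\<^sup>2 / s)
      - (\<alpha> + 1) * integral {t0..t} (\<lambda>s. inner (x s - z) (x' s) / s\<^sup>2)
      - (1/t) * inner (x t - z) (x' t)) {t0..t}"
    using t0_pos
    by (intro has_integral_diff has_integral_mult_right integrable_integral anchor_has_integral[OF assms]
        integrable_continuous_real continuous_intros continuous_on_x continuous_on_x') auto
  have "(\<lambda>s. \<Sum>i<m. \<theta> s i * ((f i (x s) + (1/2) * (norm (x' s))\<^sup>2 - f i z) / s)) integrable_on {t0..t}"
    using t0_pos by (intro integrable_theta_combination continuous_intros continuous_on_f_x continuous_on_x') auto
  then have energy_gap: "(\<lambda>s. (1/s) * (\<Sum>i<m. \<theta> s i * (f i (x s) + (1/2) * (norm (x' s))\<^sup>2 - f i z)))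
      integrable_on {t0..t}"
    by (rule integrable_eq) (simp add: sum_distrib_left)
  have "integral {t0..t} (\<lambda>s. (1/s) * (\<Sum>i<m. \<theta> s i * (f i (x s) + (1/2) * (norm (x' s))\<^sup>2 - f i z)))
    \<le> integral {t0..t} (\<lambda>s. (3/2) * ((norm (x' s))\<^sup>2 / s) - (\<alpha> + 1) * (inner (x s - z) (x' s) / s\<^sup>2)
      - (inner (scaled_gap' z s) (x' s) + inner (scaled_gap z s) (x'' s)))"
    using ode by (intro integral_le_spike[OF energy_gap has_integral_integrable[OF rate] \<open>negligible N\<close>]
        energy_gap_le_anchor_rate) auto
  also have "\<dots> = (3/2) * integral {t0..t} (\<lambda>s. (norm (x' s))\<^sup>2 / s)
      - (\<alpha> + 1) * integral {t0..t} (\<lambda>s. inner (x s - z) (x' s) / s\<^sup>2)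
      - (1/t) * inner (x t - z) (x' t)"
    by (rule integral_unique[OF rate])
  finally show ?thesis .
qed

lemma lyapunov_estimate:
  assumes "t0 \<le> t"
  shows "integral {t0..t} (\<lambda>s. (1/s) * (\<Sum>i<m. \<theta> s i * (f i (x s) + (1/2) * (norm (x' s))\<^sup>2 - f i z)))
      + 3 / (2 * \<alpha>) * (\<Sum>i<m. \<theta> t i * (f i (x t) + (1/2) * (norm (x' t))\<^sup>2 - f i z))
    \<le> (\<alpha> + 1) * (1 / t0\<^sup>2) * ((1/2) * (norm (x t0 - z))\<^sup>2)
      + 3 / (2 * \<alpha>) * (MAX i\<in>{..<m}. f i (x t0) - f i z) - (1/t) * inner (x t - z) (x' t)"
    (is "?I + ?c * (\<Sum>i<m. \<theta> t i * ?E i) \<le> ?C")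
proof -
  define J where "J = integral {t0..t} (\<lambda>s. (norm (x' s))\<^sup>2 / s)"
  define Q where "Q = integral {t0..t} (\<lambda>s. inner (x s - z) (x' s) / s\<^sup>2)"
  have I: "?I \<le> (3/2) * J - (\<alpha> + 1) * Q - (1/t) * inner (x t - z) (x' t)"
    unfolding J_def Q_def by (rule anchor_estimate[OF assms])
  have "(\<alpha> + 1) * (- (1/2) * (norm (scaled_gap z t0))\<^sup>2) \<le> (\<alpha> + 1) * Q"
    unfolding Q_def using gap_integral_lower_bound[OF assms] \<alpha>_pos by (intro mult_left_mono) auto
  moreover have "(norm (scaled_gap z t0))\<^sup>2 = (1 / t0\<^sup>2) * (norm (x t0 - z))\<^sup>2"
    by (simp add: scaled_gap_def power_divide)
  ultimately have "- ((\<alpha> + 1) * Q) \<le> (\<alpha> + 1) * (1 / t0\<^sup>2) * ((1/2) * (norm (x t0 - z))\<^sup>2)"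
    by (simp add: algebra_simps)
  moreover have "(3/2) * J + ?c * ?E i \<le> ?c * (MAX i\<in>{..<m}. f i (x t0) - f i z)" if "i < m" for i
  proof -
    have "(3/2) * J = ?c * (\<alpha> * J)" using \<alpha>_pos by simp
    also have "\<dots> \<le> ?c * (f i (x t0) - (f i (x t) + (1/2) * (norm (x' t))\<^sup>2))"
      using energy_estimate[OF assms that] \<alpha>_pos unfolding J_def by (intro mult_left_mono) auto
    also have "\<dots> = ?c * (f i (x t0) - f i z) - ?c * ?E i" by (simp add: right_diff_distrib)
    finally have "(3/2) * J + ?c * ?E i \<le> ?c * (f i (x t0) - f i z)" by linarith
    also have "\<dots> \<le> ?c * (MAX i\<in>{..<m}. f i (x t0) - f i z)"
      using that \<alpha>_pos by (intro mult_left_mono Max_ge) auto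
    finally show ?thesis .
  qed
  ultimately have "?I + ?c * ?E i \<le> ?C" if "i < m" for i
    using I that by fastforce
  then have "(\<Sum>i<m. \<theta> t i * (?I + ?c * ?E i)) \<le> ?C"
    by (rule prob_simplex_weighted_sum_le[OF \<theta>_simplex[OF assms]])
  moreover have "(\<Sum>i<m. \<theta> t i * (?I + ?c * ?E i)) = (\<Sum>i<m. \<theta> t i) * ?I + ?c * (\<Sum>i<m. \<theta> t i * ?E i)"
    by (simp add: distrib_left sum.distrib sum_distrib_left sum_distrib_right mult_ac)
  ultimately show ?thesis by (simp add: theta_sum[OF assms])
qed

end

theorem lemma4p5:
  fixes f :: "nat \<Rightarrow> 'a::{real_inner,complete_space} \<Rightarrow> real"
    and g :: "nat \<Rightarrow> 'a \<Rightarrow> 'a"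
    and m :: nat and \<alpha> t0 :: real and x0 z :: 'a
    and x x' x'' :: "real \<Rightarrow> 'a"
    and \<theta> :: "real \<Rightarrow> nat \<Rightarrow> real"
  assumes conv: "\<And>i. i < m \<Longrightarrow> convex_on UNIV (f i)"
    and grad: "\<And>i y. i < m \<Longrightarrow> (f i has_derivative (\<lambda>h. inner (g i y) h)) (at y)"
    and grad_cont: "\<And>i. i < m \<Longrightarrow> continuous_on UNIV (g i)"
    and \<alpha>_pos: "\<alpha> > 0" and t0_pos: "t0 > 0"
    and x_deriv: "\<And>t. t \<ge> t0 \<Longrightarrow> (x has_vector_derivative x' t) (at t within {t0..})"
    and x'_cont: "continuous_on {t0..} x'"
    and x''_int: "\<And>T. T \<ge> t0 \<Longrightarrow> x'' integrable_on {t0..T} \<and> (\<lambda>s. norm (x'' s)) integrable_on {t0..T}"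
    and x'_eq: "\<And>t. t \<ge> t0 \<Longrightarrow> (x'' has_integral (x' t - x' t0)) {t0..t}"
    and x''_deriv: "AE t in lborel. t \<ge> t0 \<longrightarrow> (x' has_vector_derivative x'' t) (at t within {t0..})"
    and eqn: "AE t in lborel. t > t0 \<longrightarrow>
       (\<alpha> / t) *\<^sub>R x' t + proj ((\<lambda>c. c + x'' t) ` (convex hull {g i (x t) | i. i < m})) 0 = 0"
    and init: "x t0 = x0" "x' t0 = 0"
    and \<theta>_simplex: "\<And>t. t \<ge> t0 \<Longrightarrow> \<theta> t \<in> prob_simplex m"
    and \<theta>_meas: "\<And>i. i < m \<Longrightarrow> (\<lambda>t. \<theta> t i) \<in> borel_measurable (lebesgue_on {t0..})"
    and \<theta>_proj: "\<And>t. t \<ge> t0 \<Longrightarrow>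
       proj ((\<lambda>c. c + x'' t) ` (convex hull {g i (x t) | i. i < m})) 0
         = (\<Sum>i<m. \<theta> t i *\<^sub>R g i (x t)) + x'' t"
  defines "W \<equiv> (\<lambda>i t. f i (x t) + (1/2) * (norm (x' t))\<^sup>2)"
    and "h \<equiv> (\<lambda>t. (1/2) * (norm (x t - z))\<^sup>2)"
    and "h' \<equiv> (\<lambda>t. inner (x t - z) (x' t))"
    and "Cz \<equiv> (\<alpha> + 1) * (1 / t0\<^sup>2) * ((1/2) * (norm (x t0 - z))\<^sup>2)
              + 3 / (2 * \<alpha>) * (MAX i\<in>{..<m}. f i x0 - f i z)"
  shows "\<forall>t\<ge>t0.
     integral {t0..t} (\<lambda>s. (1 / s) * (\<Sum>i<m. \<theta> s i * (W i s - f i z)))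
     + 3 / (2 * \<alpha>) * (\<Sum>i<m. \<theta> t i * (W i t - f i z))
     \<le> Cz - (1 / t) * h' t"
proof -
  \<comment> \<open>x' enters only through x'_eq\<close>
  interpret vanishing_damping_solution f g m \<alpha> t0 x x' x'' \<theta>
    by (unfold_locales; (fact assms)?) (use x''_int in blast)
  show ?thesis
    unfolding W_def h'_def Cz_def init(1)[symmetric] by (intro allI impI lyapunov_estimate)
qed

end
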